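(* Let $0<\varepsilon\le1/2$, let $X\subset\mathbb{R}^d$ be a finite nonempty (multi)set with $n=|X|$, and $C\subset\mathbb{R}^d$ a finite nonempty set. For $x\in X$ let $c(x)\in C$ be a nearest point of $C$ to $x$. Define $R^2=\frac{\varepsilon^2}{41}\cdot\frac{\Phi(C,X)}{n}$, $X^{near}=\{x\in X:\|x-c(x)\|\le R\}$, $X^{far}=X\setminus X^{near}$, and the multiset $X' = X^{far}\cup\{c(x):x\in X^{near}\}$. If $m''\in\mathbb{R}^d$ satisfies $\Phi(m'',X')\le(1+\frac{\varepsilon}{16})\Delta(X')$, then $\Phi(m'',X)\le(1+\frac\varepsilon2)\Delta(X)$.
   Context: $\mu(Y)$ denotes the centroid of a finite multiset $Y$, $\Delta(Y)=\sum_{y\in Y}\|y-\mu(Y)\|^2$. For a point $p$, $\Phi(p,Y)=\sum_{y\in Y}\|y-p\|^2$; for a finite set $C$, $\Phi(C,Y)=\sum_{y\in Y}\min_{c\in C}\|y-c\|^2$. *)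

theory Defs
  imports "HOL-Analysis.Analysis" "HOL-Library.Multiset"
begin

definition centroid :: "'a::real_vector multiset \<Rightarrow> 'a" where
  "centroid Y = scaleR (1 / real (size Y)) (sum_mset Y)"

definition Delta :: "'a::real_normed_vector multiset \<Rightarrow> real" where
  "Delta Y = sum_mset (image_mset (\<lambda>y. (norm (y - centroid Y))\<^sup>2) Y)"

definition Phi :: "'a::real_normed_vector \<Rightarrow> 'a multiset \<Rightarrow> real" where
  "Phi p Y = sum_mset (image_mset (\<lambda>y. (norm (y - p))\<^sup>2) Y)"

definition PhiC :: "'a::real_normed_vector set \<Rightarrow> 'a multiset \<Rightarrow> real" where
  "PhiC C Y = sum_mset (image_mset (\<lambda>y. Min ((\<lambda>c. (norm (y - c))\<^sup>2) ` C)) Y)"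

end

theory Submission imports Defs begin

(*
  Replacing the near points by their centres moves X by a total squared distance
  D <= |X_near| R^2.  After such a move the variance is at most 2 Delta(X) + 2D and the
  centroid has shifted by at most D/n in squared norm, so by the parallel axis theorem a
  (1 + eps/16)-approximate centroid of X' is a (1 + eps/4)-approximate centroid of X up to
  an additive error of order D.  It remains to see that D is small compared with Delta(X):
  a near point x0 lies within R of a centre, hence
    Phi(C,X) <= Phi(c(x0),X) <= 2 Delta(X) + 2n |x0 - mu(X)|^2 + 2n R^2;
  averaging over the near points and inserting the definition of R gives
  |X_near| R^2 <= (8/81) eps^2 Delta(X).
*)

lemma norm_add_square_le:
  fixes a b :: "'a::real_normed_vector"
  shows "(norm (a + b))\<^sup>2 \<le> 2 * (norm a)\<^sup>2 + 2 * (norm b)\<^sup>2"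
proof -
  have "(norm (a + b))\<^sup>2 \<le> (norm a + norm b)\<^sup>2"
    by (simp add: norm_triangle_ineq power_mono)
  also have "\<dots> \<le> 2 * (norm a)\<^sup>2 + 2 * (norm b)\<^sup>2"
    using zero_le_power2[of "norm a - norm b"] by (simp add: power2_eq_square algebra_simps)
  finally show ?thesis .
qed

lemma sum_mset_nonneg_real:
  "(\<And>y. y \<in># Y \<Longrightarrow> (0::real) \<le> f y) \<Longrightarrow> 0 \<le> (\<Sum>y\<in>#Y. f y)"
  using sum_mset_mono[of Y "\<lambda>_. 0" f] by simp

lemma sum_mset_inner_left: "(\<Sum>y\<in>#Y. inner (f y) v) = inner (\<Sum>y\<in>#Y. f y) v"
  by (induction Y) (simp_all add: inner_add_left)

lemma sum_mset_diff_distrib: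
  fixes f g :: "'b \<Rightarrow> 'a::ab_group_add"
  shows "(\<Sum>y\<in>#Y. f y - g y) = (\<Sum>y\<in>#Y. f y) - (\<Sum>y\<in>#Y. g y)"
  by (induction Y) (simp_all add: algebra_simps)

lemma sum_mset_submultiset_le:
  fixes f :: "'b \<Rightarrow> real"
  assumes "A \<subseteq># Y" and "\<And>y. y \<in># Y \<Longrightarrow> 0 \<le> f y"
  shows "(\<Sum>y\<in>#A. f y) \<le> (\<Sum>y\<in>#Y. f y)"
proof -
  from assms(1) obtain B where Y: "Y = A + B"
    by (auto simp: subset_mset.le_iff_add)
  have "0 \<le> (\<Sum>y\<in>#B. f y)"
    using assms(2) by (intro sum_mset_nonneg_real) (simp add: Y)
  then show ?thesis by (simp add: Y)
qed

lemma Delta_nonneg: "0 \<le> Delta Y"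
  unfolding Delta_def by (rule sum_mset_nonneg_real) simp

lemma Phi_eq_Delta_add:
  fixes Y :: "'a::real_inner multiset"
  shows "Phi p Y = Delta Y + real (size Y) * (norm (p - centroid Y))\<^sup>2"
proof (cases "Y = {#}")
  case True
  then show ?thesis by (simp add: Phi_def Delta_def)
next
  case False
  define \<mu> where "\<mu> = centroid Y"
  have "(\<Sum>y\<in>#Y. y - \<mu>) = sum_mset Y - real (size Y) *\<^sub>R \<mu>"
    by (induction Y) (simp_all add: algebra_simps)
  then have centred: "(\<Sum>y\<in>#Y. y - \<mu>) = 0"
    using False by (simp add: \<mu>_def centroid_def)
  have "(norm (y - p))\<^sup>2 = (norm (y - \<mu>))\<^sup>2 + 2 * inner (y - \<mu>) (\<mu> - p) + (norm (\<mu> - p))\<^sup>2" for y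
    using dot_norm[of "y - \<mu>" "\<mu> - p"] by simp
  then have "Phi p Y = (\<Sum>y\<in>#Y. (norm (y - \<mu>))\<^sup>2 + 2 * inner (y - \<mu>) (\<mu> - p) + (norm (\<mu> - p))\<^sup>2)"
    unfolding Phi_def by (intro arg_cong[where f = sum_mset] image_mset_cong)
  also have "\<dots> = Delta Y + 2 * inner (\<Sum>y\<in>#Y. y - \<mu>) (\<mu> - p) + real (size Y) * (norm (\<mu> - p))\<^sup>2"
    by (simp only: sum_mset.distrib sum_mset_distrib_left[symmetric] sum_mset_inner_left
        Delta_def \<mu>_def) simp
  finally show ?thesis
    unfolding centred by (simp add: \<mu>_def norm_minus_commute)
qed

lemma Delta_le_Phi:
  fixes Y :: "'a::real_inner multiset"
  shows "Delta Y \<le> Phi p Y"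
  by (simp add: Phi_eq_Delta_add)

lemma Phi_le_Phi_add_dist:
  fixes Y :: "'a::real_normed_vector multiset"
  shows "Phi q Y \<le> 2 * Phi p Y + 2 * real (size Y) * (norm (p - q))\<^sup>2"
proof -
  have "(norm (y - q))\<^sup>2 \<le> 2 * (norm (y - p))\<^sup>2 + 2 * (norm (p - q))\<^sup>2" for y
    using norm_add_square_le[of "y - p" "p - q"] by simp
  then have "Phi q Y \<le> (\<Sum>y\<in>#Y. 2 * (norm (y - p))\<^sup>2 + 2 * (norm (p - q))\<^sup>2)"
    unfolding Phi_def by (rule sum_mset_mono)
  then show ?thesis
    by (simp add: Phi_def sum_mset.distrib sum_mset_distrib_left)
qed

text \<open>Cauchy-Schwarz, read off from the parallel axis theorem at the origin.\<close>

lemma norm_sum_mset_square_le: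
  fixes f :: "'b \<Rightarrow> 'a::real_inner"
  shows "(norm (\<Sum>y\<in>#V. f y))\<^sup>2 \<le> real (size V) * (\<Sum>y\<in>#V. (norm (f y))\<^sup>2)"
proof (cases "V = {#}")
  case True
  then show ?thesis by simp
next
  case False
  define W where "W = image_mset f V"
  have n: "real (size W) > 0" using False by (simp add: W_def nonempty_has_size)
  have "real (size W) * (norm (centroid W))\<^sup>2 \<le> Phi 0 W"
    using Phi_eq_Delta_add[of 0 W] Delta_nonneg[of W] by simp
  moreover have "real (size W) * (norm (centroid W))\<^sup>2 = (norm (sum_mset W))\<^sup>2 / real (size W)"
    using n by (simp add: centroid_def power2_eq_square)
  ultimately have "(norm (sum_mset W))\<^sup>2 \<le> real (size W) * Phi 0 W"
    using n by (simp add: divide_le_eq mult.commute)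
  then show ?thesis by (simp add: W_def Phi_def image_mset.compositionality o_def)
qed

lemma Delta_image_le:
  fixes Y :: "'a::real_inner multiset"
  shows "Delta (image_mset g Y) \<le> 2 * Delta Y + 2 * (\<Sum>y\<in>#Y. (norm (g y - y))\<^sup>2)"
proof -
  have pointwise: "(norm (g y - centroid Y))\<^sup>2 \<le> 2 * (norm (y - centroid Y))\<^sup>2 + 2 * (norm (g y - y))\<^sup>2" for y
    using norm_add_square_le[of "y - centroid Y" "g y - y"] by simp
  have "Delta (image_mset g Y) \<le> Phi (centroid Y) (image_mset g Y)"
    by (rule Delta_le_Phi)
  also have "\<dots> \<le> (\<Sum>y\<in>#Y. 2 * (norm (y - centroid Y))\<^sup>2 + 2 * (norm (g y - y))\<^sup>2)"
    unfolding Phi_def image_mset.compositionality o_def by (rule sum_mset_mono, rule pointwise)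
  finally show ?thesis
    by (simp add: Delta_def sum_mset.distrib sum_mset_distrib_left)
qed

lemma size_mult_centroid_image_dist_le:
  fixes Y :: "'a::real_inner multiset"
  shows "real (size Y) * (norm (centroid (image_mset g Y) - centroid Y))\<^sup>2
           \<le> (\<Sum>y\<in>#Y. (norm (g y - y))\<^sup>2)"
proof (cases "Y = {#}")
  case True
  then show ?thesis by simp
next
  case False
  define n where "n = real (size Y)"
  have n: "n > 0" using False by (simp add: n_def nonempty_has_size)
  have "centroid (image_mset g Y) - centroid Y = (1 / n) *\<^sub>R (\<Sum>y\<in>#Y. g y - y)"
    by (simp add: centroid_def n_def sum_mset_diff_distrib scaleR_diff_right)
  then have "n * (norm (centroid (image_mset g Y) - centroid Y))\<^sup>2
               = (norm (\<Sum>y\<in>#Y. g y - y))\<^sup>2 / n"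
    using n by (simp add: power2_eq_square)
  also have "\<dots> \<le> (\<Sum>y\<in>#Y. (norm (g y - y))\<^sup>2)"
    using norm_sum_mset_square_le[of "\<lambda>y. g y - y" Y] n by (simp add: n_def divide_le_eq mult.commute)
  finally show ?thesis by (simp add: n_def)
qed

lemma Phi_le_of_Phi_image_le:
  fixes Y :: "'a::real_inner multiset"
  assumes "0 \<le> \<delta>" and approx: "Phi m (image_mset g Y) \<le> (1 + \<delta>) * Delta (image_mset g Y)"
  defines "D \<equiv> \<Sum>y\<in>#Y. (norm (g y - y))\<^sup>2"
  shows "Phi m Y \<le> (1 + 4 * \<delta>) * Delta Y + (4 * \<delta> + 2) * D"
proof -
  define n where "n = real (size Y)"
  define \<mu> where "\<mu> = centroid Y"
  define \<mu>' where "\<mu>' = centroid (image_mset g Y)"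
  have "n * (norm (m - \<mu>'))\<^sup>2 \<le> \<delta> * Delta (image_mset g Y)"
    using approx Phi_eq_Delta_add[of m "image_mset g Y"] by (simp add: n_def \<mu>'_def algebra_simps)
  also have "\<dots> \<le> \<delta> * (2 * Delta Y + 2 * D)"
    using Delta_image_le[of g Y] assms(1) unfolding D_def by (rule mult_left_mono)
  finally have near_new_centroid: "n * (norm (m - \<mu>'))\<^sup>2 \<le> \<delta> * (2 * Delta Y + 2 * D)" .
  have shift: "n * (norm (\<mu>' - \<mu>))\<^sup>2 \<le> D"
    using size_mult_centroid_image_dist_le by (simp add: n_def \<mu>_def \<mu>'_def D_def)
  have "n * (norm (m - \<mu>))\<^sup>2 \<le> n * (2 * (norm (m - \<mu>'))\<^sup>2 + 2 * (norm (\<mu>' - \<mu>))\<^sup>2)"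
    using norm_add_square_le[of "m - \<mu>'" "\<mu>' - \<mu>"] by (simp add: n_def mult_left_mono)
  also have "\<dots> \<le> \<delta> * (4 * Delta Y + 4 * D) + 2 * D"
    using near_new_centroid shift by (simp add: algebra_simps)
  finally show ?thesis
    using Phi_eq_Delta_add[of m Y] by (simp add: n_def \<mu>_def algebra_simps)
qed

lemma PhiC_nonneg:
  assumes "finite C" and "C \<noteq> {}"
  shows "0 \<le> PhiC C Y"
  unfolding PhiC_def using assms by (intro sum_mset_nonneg_real) simp

lemma PhiC_le_Phi:
  assumes "finite C" and "c \<in> C"
  shows "PhiC C Y \<le> Phi c Y"
  unfolding PhiC_def Phi_def using assms by (intro sum_mset_mono Min_le) auto

lemma size_mult_PhiC_le_of_close:
  fixes X :: "'a::real_inner multiset"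
  assumes "finite C" and "A \<subseteq># X"
    and close: "\<forall>x\<in>#A. c x \<in> C \<and> norm (x - c x) \<le> R"
  shows "real (size A) * PhiC C X
           \<le> 4 * real (size X) * Delta X + 2 * real (size X) * real (size A) * R\<^sup>2"
proof -
  define n where "n = real (size X)"
  define \<mu> where "\<mu> = centroid X"
  have "PhiC C X \<le> 2 * Delta X + 2 * n * (norm (x - \<mu>))\<^sup>2 + 2 * n * R\<^sup>2" if "x \<in># A" for x
  proof -
    have "PhiC C X \<le> Phi (c x) X"
      using close that assms(1) by (simp add: PhiC_le_Phi)
    also have "\<dots> \<le> 2 * Phi x X + 2 * n * (norm (x - c x))\<^sup>2"
      by (simp add: n_def Phi_le_Phi_add_dist)
    also have "\<dots> \<le> 2 * Phi x X + 2 * n * R\<^sup>2"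
    proof -
      have "(norm (x - c x))\<^sup>2 \<le> R\<^sup>2"
        using close that by (simp add: power_mono)
      then show ?thesis by (simp add: n_def mult_left_mono)
    qed
    finally show ?thesis
      by (simp add: Phi_eq_Delta_add n_def \<mu>_def)
  qed
  then have "real (size A) * PhiC C X
               \<le> (\<Sum>x\<in>#A. 2 * Delta X + 2 * n * (norm (x - \<mu>))\<^sup>2 + 2 * n * R\<^sup>2)"
    using sum_mset_mono[of A "\<lambda>_. PhiC C X"] by simp
  also have "\<dots> = 2 * real (size A) * Delta X + 2 * n * (\<Sum>x\<in>#A. (norm (x - \<mu>))\<^sup>2)
                   + 2 * n * real (size A) * R\<^sup>2"
    by (simp add: sum_mset.distrib sum_mset_distrib_left)
  also have "\<dots> \<le> 2 * n * Delta X + 2 * n * Delta X + 2 * n * real (size A) * R\<^sup>2"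
  proof -
    have "real (size A) \<le> n"
      using assms(2) by (simp add: n_def size_mset_mono)
    moreover have "(\<Sum>x\<in>#A. (norm (x - \<mu>))\<^sup>2) \<le> Delta X"
      unfolding Delta_def \<mu>_def using assms(2) by (rule sum_mset_submultiset_le) simp
    moreover have "0 \<le> (\<Sum>x\<in>#A. (norm (x - \<mu>))\<^sup>2)"
      by (rule sum_mset_nonneg_real) simp
    ultimately show ?thesis
      using Delta_nonneg[of X] by (intro add_mono mult_mono order.refl) (auto simp: n_def)
  qed
  finally show ?thesis by (simp add: n_def algebra_simps)
qed

lemma size_mult_square_radius_le:
  fixes X :: "'a::real_inner multiset"
  assumes "0 < eps" and "eps \<le> 1/2" and "X \<noteq> {#}" and "finite C" and "C \<noteq> {}"
    and "A \<subseteq># X" and "\<forall>x\<in>#A. c x \<in> C \<and> norm (x - c x) \<le> R"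
    and R: "R = sqrt (eps\<^sup>2 / 41 * (PhiC C X / real (size X)))"
  shows "real (size A) * R\<^sup>2 \<le> 8 / 81 * eps\<^sup>2 * Delta X"
proof -
  define n where "n = real (size X)"
  define a where "a = real (size A)"
  have n: "n > 0" using assms(3) by (simp add: n_def nonempty_has_size)
  have "R\<^sup>2 = eps\<^sup>2 / 41 * (PhiC C X / n)"
    using R PhiC_nonneg[OF assms(4,5)] n by (simp add: n_def)
  then have cost: "41 * n * R\<^sup>2 = eps\<^sup>2 * PhiC C X"
    using n by (simp add: field_simps)
  have "a * PhiC C X \<le> 4 * n * Delta X + 2 * n * a * R\<^sup>2"
    using size_mult_PhiC_le_of_close[OF assms(4,6,7)] by (simp add: n_def a_def)
  then have "eps\<^sup>2 * (a * PhiC C X) \<le> eps\<^sup>2 * (4 * n * Delta X + 2 * n * a * R\<^sup>2)"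
    by (simp add: mult_left_mono)
  then have "n * (41 * (a * R\<^sup>2)) \<le> n * (4 * eps\<^sup>2 * Delta X + 2 * eps\<^sup>2 * (a * R\<^sup>2))"
    using cost by (simp add: algebra_simps)
  then have "41 * (a * R\<^sup>2) \<le> 4 * eps\<^sup>2 * Delta X + 2 * eps\<^sup>2 * (a * R\<^sup>2)"
    using n by simp
  moreover have "2 * eps\<^sup>2 * (a * R\<^sup>2) \<le> 1/2 * (a * R\<^sup>2)"
  proof -
    have "eps\<^sup>2 \<le> (1/2)\<^sup>2"
      using assms(1,2) by (intro power_mono) auto
    then show ?thesis
      by (intro mult_right_mono) (auto simp: a_def power2_eq_square)
  qed
  ultimately have "81 * (a * R\<^sup>2) \<le> 8 * (eps\<^sup>2 * Delta X)"
    by linarith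
  then show ?thesis by (simp add: a_def)
qed

lemma Phi_approx_of_Phi_image_approx:
  fixes Y :: "'a::real_inner multiset"
  assumes "0 < eps" and "eps \<le> 1/2"
    and "Phi m (image_mset g Y) \<le> (1 + eps / 16) * Delta (image_mset g Y)"
    and D: "(\<Sum>y\<in>#Y. (norm (g y - y))\<^sup>2) \<le> 8 / 81 * eps\<^sup>2 * Delta Y"
  shows "Phi m Y \<le> (1 + eps / 2) * Delta Y"
proof -
  have "Phi m Y \<le> (1 + eps / 4) * Delta Y + (eps / 4 + 2) * (\<Sum>y\<in>#Y. (norm (g y - y))\<^sup>2)"
    using Phi_le_of_Phi_image_le[of "eps / 16" m g Y] assms(1,3) by simp
  also have "\<dots> \<le> (1 + eps / 2) * Delta Y"
  proof -
    have "eps\<^sup>2 \<le> eps / 2"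
      using assms(1,2) by (simp add: power2_eq_square mult_left_mono)
    then have "17 / 81 * eps\<^sup>2 \<le> eps / 4" using assms(1) by linarith
    then have "17 / 81 * eps\<^sup>2 * Delta Y \<le> eps / 4 * Delta Y"
      using Delta_nonneg by (rule mult_right_mono)
    moreover have "(eps / 4 + 2) * (\<Sum>y\<in>#Y. (norm (g y - y))\<^sup>2) \<le> 17 / 8 * (8 / 81 * eps\<^sup>2 * Delta Y)"
      using D assms(2) by (intro mult_mono) (auto intro: sum_mset_nonneg_real)
    ultimately show ?thesis by (simp add: algebra_simps)
  qed
  finally show ?thesis .
qed

lemma image_mset_if_eq_filter_mset:
  "filter_mset (\<lambda>x. \<not> P x) M + image_mset f (filter_mset P M)
     = image_mset (\<lambda>x. if P x then f x else x) M"
  by (induction M) auto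

lemma sum_mset_dist_if_eq_filter_mset:
  fixes f :: "'a \<Rightarrow> 'a::real_normed_vector"
  shows "(\<Sum>x\<in>#M. (norm ((if P x then f x else x) - x))\<^sup>2) = (\<Sum>x\<in>#filter_mset P M. (norm (f x - x))\<^sup>2)"
  by (induction M) auto

theorem mainTheorem12:
  fixes X :: "'a::euclidean_space multiset" and C :: "'a set"
    and cx :: "'a \<Rightarrow> 'a" and eps :: real and m'' :: 'a
  assumes "0 < eps" and "eps \<le> 1/2"
    and "X \<noteq> {#}"
    and "finite C" and "C \<noteq> {}"
    and "\<forall>x\<in>#X. cx x \<in> C \<and> (\<forall>c\<in>C. norm (x - cx x) \<le> norm (x - c))"
  defines "R \<equiv> sqrt (eps\<^sup>2 / 41 * (PhiC C X / real (size X)))"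
  defines "X' \<equiv> filter_mset (\<lambda>x. \<not> norm (x - cx x) \<le> R) X
                 + image_mset cx (filter_mset (\<lambda>x. norm (x - cx x) \<le> R) X)"
  assumes "Phi m'' X' \<le> (1 + eps / 16) * Delta X'"
  shows "Phi m'' X \<le> (1 + eps / 2) * Delta X"
proof -
  define near where "near x \<longleftrightarrow> norm (x - cx x) \<le> R" for x
  define A where "A = filter_mset near X"
  let ?g = "\<lambda>x. if near x then cx x else x"
  have X'_eq: "X' = image_mset ?g X"
    unfolding X'_def near_def by (rule image_mset_if_eq_filter_mset)
  have close: "\<forall>x\<in>#A. cx x \<in> C \<and> norm (x - cx x) \<le> R"
    using assms(6) by (auto simp: A_def near_def)
  have "(\<Sum>x\<in>#X. (norm (?g x - x))\<^sup>2) = (\<Sum>x\<in>#A. (norm (cx x - x))\<^sup>2)"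
    unfolding A_def by (rule sum_mset_dist_if_eq_filter_mset)
  also have "\<dots> \<le> real (size A) * R\<^sup>2"
    using sum_mset_mono[of A "\<lambda>x. (norm (cx x - x))\<^sup>2" "\<lambda>_. R\<^sup>2"] close
    by (simp add: norm_minus_commute power_mono)
  also have "\<dots> \<le> 8 / 81 * eps\<^sup>2 * Delta X"
    by (rule size_mult_square_radius_le[OF assms(1-5) _ close]) (simp_all add: A_def R_def)
  finally show ?thesis
    using Phi_approx_of_Phi_image_approx assms(1,2) \<open>Phi m'' X' \<le> (1 + eps / 16) * Delta X'\<close>
    unfolding X'_eq by blast
qed

end
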